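(* Let $\alpha=(S_g,\alpha_g)_{g\in\mathcal G}$ be a partial action of a connected groupoid $\mathcal G$ on a ring $S$. Let $y,z\in\mathcal G_0$ and let $\tau\in\mathcal G(y,z)$ be such that $S_{\tau^{-1}}=S_y$ and $S_{\tau}=S_z$. Then $S_g=S_{g\tau}$ for every $g\in\mathcal G$ with $s(g)=z$. In particular, if $\alpha$ is unital with $S_g=S1_g$ for central idempotents $1_g$, then $1_g=1_{g\tau}$ for every $g\in\mathcal G$ with $s(g)=z$.
   Context: A groupoid $\mathcal G$ is a small category in which every morphism is invertible; $\mathcal G_0$ denotes its set of objects, identified with the identity morphisms (so $\mathcal G_0\subseteq\mathcal G$). For $g\in\mathcal G$, $s(g)$ and $t(g)$ denote its source and target, $\mathcal G(x,y)=\{g\in\mathcal G: s(g)=x,\ t(g)=y\}$, and the product $gh$ is defined iff $s(g)=t(h)$. $\mathcal G$ is connected if $\mathcal G(x,y)\neq\emptyset$ for all $x,y\in\mathcal G_0$. Rings are associative, not necessarily unital. A partial action $\alpha=(S_g,\alpha_g)_{g\in\mathcal G}$ of $\mathcal G$ on a ring $S$ is a family such that: for each $g$, $S_{t(g)}$ is an ideal of $S$, $S_g$ is an ideal of $S_{t(g)}$, and $\alpha_g:S_{g^{-1}}\to S_g$ is a ring isomorphism; $\alpha_x=\mathrm{id}_{S_x}$ for $x\in\mathcal G_0$; and for all $g,h$ with $s(g)=t(h)$, $\alpha_h^{-1}(S_{g^{-1}}\cap S_h)\subseteq S_{(gh)^{-1}}$ and $\alpha_g(\alpha_h(a))=\alpha_{gh}(a)$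 for all $a\in\alpha_h^{-1}(S_{g^{-1}}\cap S_h)$. The partial action is unital if each $S_g$ is a unital ring, i.e. $S_g=S1_g$ for a central idempotent $1_g$ of $S$. *)

theory Defs
  imports Main
begin

text \<open>A groupoid is given by its set of morphisms G, its set of objects G0 (identified
with identity morphisms, G0 \<subseteq> G), source s, target t, a composition mult
(mult g h = gh, meaningful iff s g = t h) and inversion iv.\<close>

definition groupoid ::
  "'g set \<Rightarrow> 'g set \<Rightarrow> ('g \<Rightarrow> 'g) \<Rightarrow> ('g \<Rightarrow> 'g) \<Rightarrow> ('g \<Rightarrow> 'g \<Rightarrow> 'g) \<Rightarrow> ('g \<Rightarrow> 'g) \<Rightarrow> bool" where
  "groupoid G G0 s t mult iv \<longleftrightarrow>
     G0 \<subseteq> G \<and>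
     (\<forall>g\<in>G. s g \<in> G0 \<and> t g \<in> G0) \<and>
     (\<forall>x\<in>G0. s x = x \<and> t x = x) \<and>
     (\<forall>g\<in>G. \<forall>h\<in>G. s g = t h \<longrightarrow>
        mult g h \<in> G \<and> s (mult g h) = s h \<and> t (mult g h) = t g) \<and>
     (\<forall>f\<in>G. \<forall>g\<in>G. \<forall>h\<in>G. s f = t g \<and> s g = t h \<longrightarrow>
        mult (mult f g) h = mult f (mult g h)) \<and>
     (\<forall>g\<in>G. mult g (s g) = g \<and> mult (t g) g = g) \<and>
     (\<forall>g\<in>G. iv g \<in> G \<and> s (iv g) = t g \<and> t (iv g) = s g \<and>
        mult g (iv g) = t g \<and> mult (iv g) g = s g)"

definition connected_groupoid ::
  "'g set \<Rightarrow> 'g set \<Rightarrow> ('g \<Rightarrow> 'g) \<Rightarrow> ('g \<Rightarrow> 'g) \<Rightarrow> bool" where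
  "connected_groupoid G G0 s t \<longleftrightarrow> (\<forall>x\<in>G0. \<forall>y\<in>G0. \<exists>g\<in>G. s g = x \<and> t g = y)"

definition ideal_of :: "'r::ring set \<Rightarrow> 'r set \<Rightarrow> bool" where
  "ideal_of I R \<longleftrightarrow> I \<subseteq> R \<and> 0 \<in> I \<and> (\<forall>a\<in>I. \<forall>b\<in>I. a - b \<in> I) \<and>
     (\<forall>r\<in>R. \<forall>a\<in>I. r * a \<in> I \<and> a * r \<in> I)"

definition ring_iso_on :: "('r::ring \<Rightarrow> 'r) \<Rightarrow> 'r set \<Rightarrow> 'r set \<Rightarrow> bool" where
  "ring_iso_on f A B \<longleftrightarrow> bij_betw f A B \<and>
     (\<forall>a\<in>A. \<forall>b\<in>A. f (a + b) = f a + f b \<and> f (a * b) = f a * f b)"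

definition partial_action ::
  "'g set \<Rightarrow> 'g set \<Rightarrow> ('g \<Rightarrow> 'g) \<Rightarrow> ('g \<Rightarrow> 'g) \<Rightarrow> ('g \<Rightarrow> 'g \<Rightarrow> 'g) \<Rightarrow> ('g \<Rightarrow> 'g)
    \<Rightarrow> ('g \<Rightarrow> 'r::ring set) \<Rightarrow> ('g \<Rightarrow> 'r \<Rightarrow> 'r) \<Rightarrow> bool" where
  "partial_action G G0 s t mult iv Sd act \<longleftrightarrow>
     (\<forall>g\<in>G. ideal_of (Sd (t g)) UNIV \<and> ideal_of (Sd g) (Sd (t g)) \<and>
        ring_iso_on (act g) (Sd (iv g)) (Sd g)) \<and>
     (\<forall>x\<in>G0. \<forall>a\<in>Sd x. act x a = a) \<and>
     (\<forall>g\<in>G. \<forall>h\<in>G. s g = t h \<longrightarrow>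
        (\<forall>a\<in>Sd (iv h). act h a \<in> Sd (iv g) \<inter> Sd h \<longrightarrow>
           a \<in> Sd (iv (mult g h)) \<and> act g (act h a) = act (mult g h) a))"

definition unital_with ::
  "'g set \<Rightarrow> ('g \<Rightarrow> 'r::ring set) \<Rightarrow> ('g \<Rightarrow> 'r) \<Rightarrow> bool" where
  "unital_with G Sd one \<longleftrightarrow>
     (\<forall>g\<in>G. one g * one g = one g \<and> (\<forall>a. one g * a = a * one g) \<and>
        Sd g = {a * one g | a. True})"

end

theory Submission
  imports Defs
begin

text \<open>If \<open>s g = t h\<close> and \<open>S h = S (t h)\<close>, then \<open>S g \<subseteq> S (g h)\<close>: an element
  \<open>b = \<alpha>\<^sub>g a'\<close> of \<open>S g\<close> has \<open>a' \<in> S (s g) = S h\<close>, so \<open>a' = \<alpha>\<^sub>h a\<close>, and the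
  composition axiom gives \<open>b = \<alpha>\<^sub>g\<^sub>h a \<in> S (g h)\<close>. Both \<open>\<tau>\<close> and \<open>\<tau>\<^sup>-\<^sup>1\<close> satisfy the
  hypothesis on \<open>h\<close>, whence \<open>S g \<subseteq> S (g \<tau>) \<subseteq> S (g \<tau> \<tau>\<^sup>-\<^sup>1) = S g\<close>. In the unital case, two central idempotents generating the same ideal are equal.\<close>

locale is_groupoid =
  fixes G G0 :: "'g set" and s t iv :: "'g \<Rightarrow> 'g" and mult :: "'g \<Rightarrow> 'g \<Rightarrow> 'g"
  assumes groupoid: "groupoid G G0 s t mult iv"
begin

lemma mult_closed:
  assumes "g \<in> G" "h \<in> G" "s g = t h"
  shows "mult g h \<in> G" "s (mult g h) = s h" "t (mult g h) = t g"
  using groupoid assms unfolding groupoid_def by blast+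

lemma iv_closed:
  assumes "g \<in> G"
  shows "iv g \<in> G" "s (iv g) = t g" "t (iv g) = s g"
  using groupoid assms unfolding groupoid_def by blast+

lemma mult_assoc:
  assumes "f \<in> G" "g \<in> G" "h \<in> G" "s f = t g" "s g = t h"
  shows "mult (mult f g) h = mult f (mult g h)"
  using groupoid assms unfolding groupoid_def by blast

lemma mult_source:
  assumes "g \<in> G"
  shows "mult g (s g) = g"
  using groupoid assms unfolding groupoid_def by blast

lemma mult_iv:
  assumes "g \<in> G"
  shows "mult g (iv g) = t g"
  using groupoid assms unfolding groupoid_def by blast

lemma mult_mult_iv:
  assumes "g \<in> G" "h \<in> G" "s g = t h"
  shows "mult (mult g h) (iv h) = g"
proof -
  have "mult (mult g h) (iv h) = mult g (mult h (iv h))"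
    using mult_assoc[OF assms(1,2) iv_closed(1)[OF assms(2)] assms(3)] iv_closed(3)[OF assms(2)]
    by simp
  also have "\<dots> = g"
    using mult_iv[OF assms(2)] mult_source[OF assms(1)] assms(3) by simp
  finally show ?thesis .
qed

end

locale groupoid_partial_action = is_groupoid G G0 s t iv mult
  for G G0 :: "'g set" and s t iv :: "'g \<Rightarrow> 'g" and mult :: "'g \<Rightarrow> 'g \<Rightarrow> 'g" +
  fixes Sd :: "'g \<Rightarrow> 'r::ring set" and act :: "'g \<Rightarrow> 'r \<Rightarrow> 'r"
  assumes partial_action: "partial_action G G0 s t mult iv Sd act"
begin

lemma Sd_subset_Sd_target:
  assumes "g \<in> G"
  shows "Sd g \<subseteq> Sd (t g)"
  using partial_action assms unfolding partial_action_def ideal_of_def by blast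

lemma act_image:
  assumes "g \<in> G"
  shows "act g ` Sd (iv g) = Sd g"
  using partial_action assms unfolding partial_action_def ring_iso_on_def bij_betw_def by blast

lemma act_mult:
  assumes "g \<in> G" "h \<in> G" "s g = t h" "a \<in> Sd (iv h)" "act h a \<in> Sd (iv g)"
  shows "a \<in> Sd (iv (mult g h))" "act g (act h a) = act (mult g h) a"
proof -
  have "act h a \<in> Sd h"
    using act_image[OF assms(2)] assms(4) by blast
  with partial_action assms show "a \<in> Sd (iv (mult g h))" "act g (act h a) = act (mult g h) a"
    unfolding partial_action_def by blast+
qed

lemma Sd_subset_Sd_mult:
  assumes g: "g \<in> G" and h: "h \<in> G" "s g = t h" "Sd h = Sd (t h)"
  shows "Sd g \<subseteq> Sd (mult g h)"
proof
  fix b assume "b \<in> Sd g"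
  then obtain a' where a': "a' \<in> Sd (iv g)" "b = act g a'"
    using act_image[OF g] by blast
  have "a' \<in> Sd h"
    using a'(1) Sd_subset_Sd_target[OF iv_closed(1)[OF g]] iv_closed[OF g] h by auto
  then obtain a where a: "a \<in> Sd (iv h)" "a' = act h a"
    using act_image[OF h(1)] by blast
  have "b = act (mult g h) a"
    using act_mult[OF g h(1,2) a(1)] a a' by simp
  moreover have "a \<in> Sd (iv (mult g h))"
    using act_mult[OF g h(1,2) a(1)] a a' by simp
  ultimately show "b \<in> Sd (mult g h)"
    using act_image[OF mult_closed(1)[OF g h(1,2)]] by (metis rev_image_eqI)
qed

lemma Sd_eq_Sd_mult:
  assumes g: "g \<in> G" and h: "h \<in> G" "s g = t h"
    and full: "Sd h = Sd (t h)" "Sd (iv h) = Sd (s h)"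
  shows "Sd g = Sd (mult g h)"
proof
  show "Sd g \<subseteq> Sd (mult g h)"
    using Sd_subset_Sd_mult[OF g h full(1)] .
  have "Sd (mult g h) \<subseteq> Sd (mult (mult g h) (iv h))"
    using Sd_subset_Sd_mult[OF mult_closed(1)[OF g h] iv_closed(1)[OF h(1)]]
      mult_closed(2)[OF g h] iv_closed[OF h(1)] full(2) by simp
  then show "Sd (mult g h) \<subseteq> Sd g"
    using mult_mult_iv[OF g h] by simp
qed

end

lemma central_idempotent_eq:
  fixes e f :: "'a::semigroup_mult"
  assumes idem: "e * e = e" "f * f = f" and central: "\<And>a. e * a = a * e"
    and ideal_eq: "{a * e | a. True} = {a * f | a. True}"
  shows "e = f"
proof -
  have absorb: "x * y = x" if x: "x \<in> {a * y | a. True}" and y: "y * y = y" for x y :: 'a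
  proof -
    obtain a where "x = a * y" using x by blast
    then show ?thesis using y by (simp add: mult.assoc)
  qed
  have generator: "x \<in> {a * x | a. True}" if "x * x = x" for x :: 'a
    using that by (metis (mono_tags, lifting) mem_Collect_eq)
  have e_in: "e \<in> {a * f | a. True}"
    using generator[OF idem(1)] by (simp only: ideal_eq)
  have f_in: "f \<in> {a * e | a. True}"
    using generator[OF idem(2)] by (simp only: ideal_eq)
  have "e = e * f"
    using absorb[OF e_in idem(2)] ..
  also have "\<dots> = f * e"
    by (rule central)
  also have "\<dots> = f"
    using absorb[OF f_in idem(1)] .
  finally show ?thesis .
qed

lemma unital_withD:
  assumes "unital_with G Sd one" "g \<in> G"
  shows "one g * one g = one g" "one g * a = a * one g" "Sd g = {a * one g | a. True}"
  using assms unfolding unital_with_def by blast+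

lemma unital_one_eq_if_Sd_eq:
  assumes unital: "unital_with G Sd one" and "g \<in> G" "h \<in> G" "Sd g = Sd h"
  shows "one g = one h"
proof (rule central_idempotent_eq)
  show "one g * one g = one g" "one h * one h = one h" "\<And>a. one g * a = a * one g"
    using unital_withD[OF unital] assms(2,3) by blast+
  show "{a * one g | a. True} = {a * one h | a. True}"
    unfolding unital_withD(3)[OF unital assms(2), symmetric] unital_withD(3)[OF unital assms(3), symmetric]
    by (rule assms(4))
qed

theorem proposition2p6:
  fixes G G0 :: "'g set" and s t iv :: "'g \<Rightarrow> 'g" and mult :: "'g \<Rightarrow> 'g \<Rightarrow> 'g"
    and Sd :: "'g \<Rightarrow> 'r::ring set" and act :: "'g \<Rightarrow> 'r \<Rightarrow> 'r"
    and y z \<tau> :: 'g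
  assumes "groupoid G G0 s t mult iv"
    and "connected_groupoid G G0 s t"
    and "partial_action G G0 s t mult iv Sd act"
    and "y \<in> G0" and "z \<in> G0"
    and "\<tau> \<in> G" and "s \<tau> = y" and "t \<tau> = z"
    and "Sd (iv \<tau>) = Sd y" and "Sd \<tau> = Sd z"
  shows "(\<forall>g\<in>G. s g = z \<longrightarrow> Sd g = Sd (mult g \<tau>)) \<and>
         (\<forall>one. unital_with G Sd one \<longrightarrow>
            (\<forall>g\<in>G. s g = z \<longrightarrow> one g = one (mult g \<tau>)))"
proof -
  interpret groupoid_partial_action G G0 s t iv mult Sd act
    using assms(1,3) by unfold_locales
  have Sd_eq: "Sd g = Sd (mult g \<tau>)" if "g \<in> G" "s g = z" for g
    using Sd_eq_Sd_mult[OF that(1) assms(6)] that assms(7-10) by simp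
  moreover have "one g = one (mult g \<tau>)"
    if "unital_with G Sd one" "g \<in> G" "s g = z" for one g
    using unital_one_eq_if_Sd_eq[OF that(1,2) mult_closed(1)[OF that(2) assms(6)] Sd_eq[OF that(2,3)]]
      that(3) assms(8) by simp
  ultimately show ?thesis by blast
qed

end
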